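(* Let $(\mathcal{X},\rho)$ be a bounded length space with finite doubling dimension $d$ and diameter $R$, equipped with a finite Borel measure $\nu$. For $\eta\in\mathcal{F}_0$, let $\mathfrak{b}$ be the box-counting dimension of $\partial_\eta\mathcal{X}$. Then for any $c>0$ there exists a constant $C>0$ such that for all $r>0$, \[\mathcal{N}_{\mathrm{ML},\eta}\big(\mathcal{X}\setminus(\partial_\eta\mathcal{X})^r\big)\le C R^{4d} r^{-(\mathfrak{b}+c)}.\]
   Context: A length space: $\rho(x,x')=\inf_\gamma\ell(\gamma)$ over continuous paths from $x$ to $x'$. Doubling dimension $d$: every open ball $B(x,r)$ can be covered by $2^d$ balls of radius $r/2$. $\mathrm{margin}_\eta(x)=\inf\{\rho(x,x'):\eta(x')\ne\eta(x)\}$; $\partial_\eta\mathcal{X}=\{x:\mathrm{margin}_\eta(x)=0\}$; $\mathcal{F}_0$ = measurable $\eta$ with $\nu(\partial_\eta\mathcal{X})=0$. $A^r=\bigcup_{x\in A}B(x,r)$. A set $U$ is mutually-labeling for $\eta$ if $\sup_{z,z'\in U}\rho(z,z')<\mathrm{margin}_\eta(x)$ for all $x\in U$; $\mathcal{N}_{\mathrm{ML},\eta}(V)$ is the minimal number of mutually-labeling sets covering $V$. $\mathcal{N}_r(A)$ is the minimal number of radius-$r$ balls covering $A$, and the box-counting dimension is $\mathfrak{b}(A)=\limsup_{r\to0}\log\mathcal{N}_r(A)/\log(1/r)$. *)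

theory Defs
  imports "HOL-Analysis.Analysis" "HOL-Probability.Probability"
begin

definition path_length :: "(real \<Rightarrow> 'a::metric_space) \<Rightarrow> ereal" where
  "path_length g = (SUP tn \<in> {(t, n). t 0 = 0 \<and> t n = 1 \<and> (\<forall>i<n. t i \<le> t (Suc i))}.
      ereal (\<Sum>i<snd tn. dist (g (fst tn i)) (g (fst tn (Suc i)))))"

definition length_space :: "'a::metric_space itself \<Rightarrow> bool" where
  "length_space _ \<longleftrightarrow> (\<forall>x y::'a. ereal (dist x y) =
      (INF g \<in> {g. path g \<and> pathstart g = x \<and> pathfinish g = y}. path_length g))"

definition doubling_dim :: "'a::metric_space itself \<Rightarrow> real \<Rightarrow> bool" where
  "doubling_dim _ d \<longleftrightarrow> (\<forall>(x::'a) r. r > 0 \<longrightarrow>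
      (\<exists>F. finite F \<and> real (card F) \<le> 2 powr d \<and> ball x r \<subseteq> (\<Union>y\<in>F. ball y (r/2))))"

definition margin :: "('a::metric_space \<Rightarrow> 'b) \<Rightarrow> 'a \<Rightarrow> ereal" where
  "margin \<eta> x = (INF x' \<in> {x'. \<eta> x' \<noteq> \<eta> x}. ereal (dist x x'))"

definition boundary :: "('a::metric_space \<Rightarrow> 'b) \<Rightarrow> 'a set" where
  "boundary \<eta> = {x. margin \<eta> x = 0}"

definition thicken :: "'a::metric_space set \<Rightarrow> real \<Rightarrow> 'a set" where
  "thicken A r = (\<Union>x\<in>A. ball x r)"

definition mutually_labeling :: "('a::metric_space \<Rightarrow> 'b) \<Rightarrow> 'a set \<Rightarrow> bool" where
  "mutually_labeling \<eta> U \<longleftrightarrow>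
     (\<forall>x\<in>U. (SUP z\<in>U. SUP z'\<in>U. ereal (dist z z')) < margin \<eta> x)"

definition N_ML :: "('a::metric_space \<Rightarrow> 'b) \<Rightarrow> 'a set \<Rightarrow> ereal" where
  "N_ML \<eta> V = (INF F \<in> {F. finite F \<and> (\<forall>U\<in>F. mutually_labeling \<eta> U) \<and> V \<subseteq> \<Union>F}.
      ereal (real (card F)))"

definition covering_number :: "real \<Rightarrow> 'a::metric_space set \<Rightarrow> ereal" where
  "covering_number r A = (INF F \<in> {F. finite F \<and> A \<subseteq> (\<Union>x\<in>F. ball x r)}.
      ereal (real (card F)))"

definition box_dim :: "'a::metric_space set \<Rightarrow> ereal" where
  "box_dim A = Limsup (at_right 0) (\<lambda>r.
      if covering_number r A = \<infinity> then \<infinity>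
      else ereal (ln (real_of_ereal (covering_number r A)) / ln (1 / r)))"

end

theory Submission
  imports Defs
begin

(* A point at distance at least s from the boundary of eta has margin at least s: in a length
   space a short path to a differently labelled point would have to cross the boundary.
   So the annulus between the s- and 2s-neighbourhoods of the boundary is covered by
   2^(4d) N_s(boundary) mutually-labeling sets: every point of it lies within 3s of a centre
   of an s-cover of the boundary, and doubling splits each 3s-ball into 2^(4d) pieces of
   diameter below s. Summing over the dyadic scales r 2^j up to the diameter, and bounding
   N_s(boundary) by K s^-(b+c) via the box-counting dimension b, gives a geometric series
   dominated by its first term, of order r^-(b+c). *)

lemma margin_le_dist:
  assumes "\<eta> y \<noteq> \<eta> x"
  shows "margin \<eta> x \<le> ereal (dist x y)"
  unfolding margin_def by (rule INF_lower) (use assms in auto)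

lemma margin_nonneg: "0 \<le> margin \<eta> x"
  unfolding margin_def by (rule INF_greatest) auto

lemma boundary_imp_other_label:
  assumes "x \<in> boundary \<eta>"
  obtains y where "\<eta> y \<noteq> \<eta> x"
proof -
  have "margin \<eta> x \<noteq> \<infinity>" using assms by (simp add: boundary_def)
  then show ?thesis using that by (force simp: margin_def top_ereal_def[symmetric])
qed

lemma diameter_pos_if_boundary_nonempty:
  fixes \<eta> :: "'a::metric_space \<Rightarrow> 'b"
  assumes "bounded (UNIV::'a set)" "boundary \<eta> \<noteq> {}"
  shows "0 < diameter (UNIV::'a set)"
proof -
  obtain b y where "b \<in> boundary \<eta>" "\<eta> y \<noteq> \<eta> b"
    using assms(2) boundary_imp_other_label by blast
  then show ?thesis
    using diameter_bounded_bound[OF assms(1), of y b] by (metis UNIV_I dist_pos_lt order_less_le_trans)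
qed

lemma label_locally_constant:
  assumes "x \<notin> boundary \<eta>"
  obtains \<epsilon> where "\<epsilon> > 0" "\<And>y. dist x y < \<epsilon> \<Longrightarrow> \<eta> y = \<eta> x"
proof -
  have "0 < margin \<eta> x"
    using assms margin_nonneg[of \<eta> x] by (simp add: boundary_def order_less_le)
  then obtain \<epsilon> where \<epsilon>: "0 < ereal \<epsilon>" "ereal \<epsilon> < margin \<eta> x"
    by (meson ereal_dense2 order.strict_trans)
  show ?thesis
  proof (rule that)
    show "\<epsilon> > 0" using \<epsilon>(1) by simp
    show "\<eta> y = \<eta> x" if "dist x y < \<epsilon>" for y
    proof (rule ccontr)
      assume "\<eta> y \<noteq> \<eta> x"
      then have "ereal \<epsilon> < ereal (dist x y)"
        using \<epsilon>(2) margin_le_dist order.strict_trans2 by blast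
      then show False using that by simp
    qed
  qed
qed

lemma label_constant_on_connected:
  assumes "connected S" "S \<inter> boundary \<eta> = {}"
  shows "\<eta> constant_on S"
proof (rule locally_constant_imp_constant[OF assms(1)])
  fix a assume "a \<in> S"
  then obtain \<epsilon> where "\<epsilon> > 0" and \<epsilon>: "\<And>y. dist a y < \<epsilon> \<Longrightarrow> \<eta> y = \<eta> a"
    using assms(2) label_locally_constant by blast
  have "openin (top_of_set S) (S \<inter> ball a \<epsilon>)" by (simp add: openin_open_Int)
  moreover have "a \<in> S \<inter> ball a \<epsilon>" using \<open>a \<in> S\<close> \<open>\<epsilon> > 0\<close> by simp
  moreover have "\<forall>x\<in>S \<inter> ball a \<epsilon>. \<eta> x = \<eta> a" using \<epsilon> by simp
  ultimately show "\<exists>T. openin (top_of_set S) T \<and> a \<in> T \<and> (\<forall>x\<in>T. \<eta> x = \<eta> a)"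
    by blast
qed

lemma dist_pathstart_le_path_length:
  assumes "y \<in> path_image g"
  shows "ereal (dist (pathstart g) y) \<le> path_length g"
proof -
  obtain t where t: "0 \<le> t" "t \<le> 1" "y = g t"
    using assms by (auto simp: path_image_def)
  define p where "p = (\<lambda>i::nat. if i = 0 then 0 else if i = 1 then t else (1::real))"
  have p: "(p, 2) \<in> {(t, n). t 0 = 0 \<and> t n = 1 \<and> (\<forall>i<n. t i \<le> t (Suc i))}"
    using t unfolding p_def by (auto simp: less_2_cases_iff)
  have "dist (pathstart g) y \<le> (\<Sum>i<2. dist (g (p i)) (g (p (Suc i))))"
    using t by (simp add: p_def pathstart_def numeral_2_eq_2)
  also have "ereal \<dots> \<le> path_length g"
    unfolding path_length_def by (rule SUP_upper2[OF p]) simp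
  finally show ?thesis by simp
qed

(* A short path from x to a differently labelled point must meet the boundary. *)
lemma length_space_margin_ge:
  fixes x :: "'a::metric_space"
  assumes "length_space TYPE('a)" and far: "\<And>b. b \<in> boundary \<eta> \<Longrightarrow> r \<le> dist x b"
  shows "ereal r \<le> margin \<eta> x"
  unfolding margin_def
proof (rule INF_greatest, rule ccontr)
  fix y assume "y \<in> {y. \<eta> y \<noteq> \<eta> x}" and "\<not> ereal r \<le> ereal (dist x y)"
  then have label: "\<eta> y \<noteq> \<eta> x" and "ereal (dist x y) < ereal r" by auto
  with assms(1) obtain g where g: "path g" "pathstart g = x" "pathfinish g = y" "path_length g < ereal r"
    unfolding length_space_def by (metis (mono_tags, lifting) INF_less_iff mem_Collect_eq)
  have "\<not> \<eta> constant_on path_image g"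
    using g label by (metis constant_on_def pathfinish_in_path_image pathstart_in_path_image)
  then obtain b where b: "b \<in> path_image g" "b \<in> boundary \<eta>"
    using label_constant_on_connected[OF connected_path_image[OF g(1)]] by blast
  have "ereal (dist x b) \<le> path_length g"
    using dist_pathstart_le_path_length[OF b(1)] g(2) by simp
  then have "ereal (dist x b) < ereal r" using g(4) by (rule le_less_trans)
  then show False using far[OF b(2)] by simp
qed

definition ml_coverable :: "('a::metric_space \<Rightarrow> 'b) \<Rightarrow> 'a set \<Rightarrow> real \<Rightarrow> bool" where
  "ml_coverable \<eta> V K \<longleftrightarrow>
     (\<exists>F. finite F \<and> (\<forall>U\<in>F. mutually_labeling \<eta> U) \<and> V \<subseteq> \<Union>F \<and> real (card F) \<le> K)"

lemma N_ML_le_if_ml_coverable: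
  assumes "ml_coverable \<eta> V K"
  shows "N_ML \<eta> V \<le> ereal K"
proof -
  obtain F where F: "finite F" "\<forall>U\<in>F. mutually_labeling \<eta> U" "V \<subseteq> \<Union>F" "real (card F) \<le> K"
    using assms unfolding ml_coverable_def by blast
  have "N_ML \<eta> V \<le> ereal (real (card F))"
    unfolding N_ML_def by (rule INF_lower) (use F in auto)
  also have "\<dots> \<le> ereal K" using F(4) by simp
  finally show ?thesis .
qed

lemma ml_coverable_Un:
  assumes "ml_coverable \<eta> A K" "ml_coverable \<eta> B L"
  shows "ml_coverable \<eta> (A \<union> B) (K + L)"
proof -
  obtain F G where
    F: "finite F" "\<forall>U\<in>F. mutually_labeling \<eta> U" "A \<subseteq> \<Union>F" "real (card F) \<le> K" and
    G: "finite G" "\<forall>U\<in>G. mutually_labeling \<eta> U" "B \<subseteq> \<Union>G" "real (card G) \<le> L"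
    using assms unfolding ml_coverable_def by blast
  have "real (card (F \<union> G)) \<le> K + L"
    using card_Un_le[of F G] F(4) G(4) by linarith
  then show ?thesis
    unfolding ml_coverable_def using F G by (intro exI[of _ "F \<union> G"]) auto
qed

lemma ml_coverable_mono:
  assumes "ml_coverable \<eta> B K" "A \<subseteq> B" "K \<le> L"
  shows "ml_coverable \<eta> A L"
  using assms unfolding ml_coverable_def by (meson order_trans subset_trans)

lemma mutually_labeling_subset_ball:
  assumes "U \<subseteq> ball z \<rho>" and "\<And>x. x \<in> U \<Longrightarrow> ereal (2 * \<rho>) < margin \<eta> x"
  shows "mutually_labeling \<eta> U"
proof -
  have "(SUP x\<in>U. SUP y\<in>U. ereal (dist x y)) \<le> ereal (2 * \<rho>)"
  proof (intro SUP_least)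
    fix x y assume "x \<in> U" "y \<in> U"
    then have "dist z x < \<rho>" "dist z y < \<rho>" using assms(1) by auto
    then show "ereal (dist x y) \<le> ereal (2 * \<rho>)"
      using dist_triangle[of x y z] by (simp add: dist_commute)
  qed
  then show ?thesis
    unfolding mutually_labeling_def using assms(2) by (meson le_less_trans)
qed

lemma mutually_labeling_if_far_from_boundary:
  fixes \<eta> :: "'a::metric_space \<Rightarrow> 'b"
  assumes ls: "length_space TYPE('a)"
    and "U \<subseteq> ball z \<rho>" "2 * \<rho> < s" "U \<inter> thicken (boundary \<eta>) s = {}"
  shows "mutually_labeling \<eta> U"
proof (rule mutually_labeling_subset_ball[OF assms(2)])
  fix x assume "x \<in> U"
  then have "x \<notin> thicken (boundary \<eta>) s" using assms(4) by blast
  then have "s \<le> dist x b" if "b \<in> boundary \<eta>" for b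
    using that by (auto simp: thicken_def dist_commute not_less)
  then have "ereal s \<le> margin \<eta> x" by (rule length_space_margin_ge[OF ls])
  moreover have "ereal (2 * \<rho>) < ereal s" using assms(3) by simp
  ultimately show "ereal (2 * \<rho>) < margin \<eta> x" by (meson less_le_trans)
qed

lemma card_UN_le_card_mult:
  assumes "finite F" "\<And>y. y \<in> F \<Longrightarrow> real (card (G y)) \<le> m"
  shows "real (card (\<Union>y\<in>F. G y)) \<le> real (card F) * m"
proof -
  have "real (card (\<Union>y\<in>F. G y)) \<le> (\<Sum>y\<in>F. real (card (G y)))"
    using card_UN_le[OF assms(1), of G] by (simp flip: of_nat_sum)
  also have "\<dots> \<le> real (card F) * m"
    using sum_mono[of F _ "\<lambda>_. m"] assms(2) by simp
  finally show ?thesis .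
qed

lemma doubling_dim_nonneg:
  assumes "doubling_dim TYPE('a::metric_space) d"
  shows "0 \<le> d"
proof -
  obtain F where F: "finite F" "real (card F) \<le> 2 powr d" "ball (undefined::'a) 1 \<subseteq> (\<Union>y\<in>F. ball y (1/2))"
    using assms unfolding doubling_dim_def by (meson zero_less_one)
  have "F \<noteq> {}" using F(3) centre_in_ball[of undefined 1] by fastforce
  then have "1 \<le> real (card F)" using F(1) by (simp add: Suc_leI card_gt_0_iff)
  then have "1 \<le> 2 powr d" using F(2) by simp
  then show ?thesis using powr_less_one[of 2 d] by fastforce
qed

lemma doubling_dim_ball_cover_pow:
  assumes "doubling_dim TYPE('a::metric_space) d" "\<rho> > 0"
  shows "\<exists>G. finite G \<and> real (card G) \<le> (2 powr d) ^ k \<and> ball (x::'a) \<rho> \<subseteq> (\<Union>z\<in>G. ball z (\<rho> / 2 ^ k))"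
  using assms(2)
proof (induction k arbitrary: x \<rho>)
  case 0
  then show ?case by (intro exI[of _ "{x}"]) auto
next
  case (Suc k)
  obtain F where F: "finite F" "real (card F) \<le> 2 powr d" "ball x \<rho> \<subseteq> (\<Union>y\<in>F. ball y (\<rho> / 2))"
    using assms(1) Suc.prems unfolding doubling_dim_def by blast
  have "\<forall>y::'a. \<exists>H. finite H \<and> real (card H) \<le> (2 powr d) ^ k \<and> ball y (\<rho> / 2) \<subseteq> (\<Union>z\<in>H. ball z (\<rho> / 2 / 2 ^ k))"
  proof
    fix y :: 'a
    have "0 < \<rho> / 2" using Suc.prems by simp
    then show "\<exists>H. finite H \<and> real (card H) \<le> (2 powr d) ^ k \<and> ball y (\<rho> / 2) \<subseteq> (\<Union>z\<in>H. ball z (\<rho> / 2 / 2 ^ k))"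
      by (rule Suc.IH)
  qed
  then obtain G :: "'a \<Rightarrow> 'a set" where G: "\<And>y. finite (G y)" "\<And>y. real (card (G y)) \<le> (2 powr d) ^ k"
    "\<And>y. ball y (\<rho> / 2) \<subseteq> (\<Union>z\<in>G y. ball z (\<rho> / 2 / 2 ^ k))"
    by metis
  have "real (card (\<Union>y\<in>F. G y)) \<le> real (card F) * (2 powr d) ^ k"
    using card_UN_le_card_mult[OF F(1)] G(2) by blast
  also have "\<dots> \<le> (2 powr d) ^ Suc k"
    using F(2) by (simp add: mult_right_mono)
  finally show ?case
    using F(1,3) G(1,3) by (intro exI[of _ "\<Union>y\<in>F. G y"]) (fastforce simp: mult.commute)
qed

lemma covering_number_le_card:
  assumes "finite F" "A \<subseteq> (\<Union>x\<in>F. ball x s)"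
  shows "covering_number s A \<le> ereal (real (card F))"
  unfolding covering_number_def by (rule INF_lower) (use assms in auto)

lemma covering_number_antimono:
  assumes "s \<le> s'"
  shows "covering_number s' A \<le> covering_number s A"
  unfolding covering_number_def
proof (rule INF_mono)
  fix F assume F: "F \<in> {F. finite F \<and> A \<subseteq> (\<Union>x\<in>F. ball x s)}"
  have "(\<Union>x\<in>F. ball x s) \<subseteq> (\<Union>x\<in>F. ball x s')" using subset_ball[OF assms] by blast
  then have "F \<in> {F. finite F \<and> A \<subseteq> (\<Union>x\<in>F. ball x s')}" using F by blast
  then show "\<exists>G\<in>{F. finite F \<and> A \<subseteq> (\<Union>x\<in>F. ball x s')}. ereal (real (card G)) \<le> ereal (real (card F))"
    by blast
qed

lemma covering_number_ge_1:
  assumes "A \<noteq> {}"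
  shows "1 \<le> covering_number s A"
  unfolding covering_number_def
proof (rule INF_greatest)
  fix F assume "F \<in> {F. finite F \<and> A \<subseteq> (\<Union>x\<in>F. ball x s)}"
  then have "finite F" "F \<noteq> {}" using assms by auto
  then show "1 \<le> ereal (real (card F))" by (simp add: Suc_leI card_gt_0_iff)
qed

lemma covering_number_attained:
  assumes "covering_number s A \<noteq> \<infinity>"
  obtains F where "finite F" "A \<subseteq> (\<Union>x\<in>F. ball x s)" "covering_number s A = ereal (real (card F))"
proof -
  define P where "P n \<longleftrightarrow> (\<exists>F. finite F \<and> A \<subseteq> (\<Union>x\<in>F. ball x s) \<and> card F = n)" for n
  have "\<exists>n. P n"
    using assms unfolding covering_number_def P_def by (force simp: top_ereal_def[symmetric])
  then obtain F where F: "finite F" "A \<subseteq> (\<Union>x\<in>F. ball x s)" "card F = (LEAST n. P n)"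
    using LeastI_ex[of P] unfolding P_def by blast
  have "covering_number s A \<ge> ereal (real (card F))"
    unfolding covering_number_def
  proof (rule INF_greatest)
    fix G assume "G \<in> {G. finite G \<and> A \<subseteq> (\<Union>x\<in>G. ball x s)}"
    then have "card F \<le> card G" unfolding F(3) by (intro Least_le) (auto simp: P_def)
    then show "ereal (real (card F)) \<le> ereal (real (card G))" by simp
  qed
  then show ?thesis
    using that F(1,2) covering_number_le_card[OF F(1,2)] by (simp add: antisym)
qed

lemma doubling_dim_ball_cover_le_powr:
  assumes "doubling_dim TYPE('a::metric_space) d" "0 < s" "s \<le> \<rho>"
  shows "\<exists>G. finite G \<and> real (card G) \<le> (2 * \<rho> / s) powr d \<and> ball (x::'a) \<rho> \<subseteq> (\<Union>z\<in>G. ball z s)"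
proof -
  have "\<exists>k. \<rho> / 2 ^ k \<le> s"
  proof -
    obtain k where "\<rho> / s < 2 ^ k" using real_arch_pow[of 2 "\<rho> / s"] by auto
    then show ?thesis using \<open>0 < s\<close> by (intro exI[of _ k]) (simp add: field_simps)
  qed
  then obtain k where k: "\<rho> / 2 ^ k \<le> s" "\<And>j. j < k \<Longrightarrow> s < \<rho> / 2 ^ j"
    using exists_least_iff[of "\<lambda>k. \<rho> / 2 ^ k \<le> s"] by (meson not_le)
  have pow: "2 ^ k \<le> 2 * \<rho> / s"
  proof (cases k)
    case 0
    then show ?thesis using \<open>0 < s\<close> \<open>s \<le> \<rho>\<close> by (simp add: field_simps)
  next
    case (Suc j)
    then show ?thesis using k(2)[of j] \<open>0 < s\<close> by (simp add: field_simps)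
  qed
  have "0 < \<rho>" using \<open>0 < s\<close> \<open>s \<le> \<rho>\<close> by linarith
  then obtain G where G: "finite G" "real (card G) \<le> (2 powr d) ^ k"
      "ball x \<rho> \<subseteq> (\<Union>z\<in>G. ball z (\<rho> / 2 ^ k))"
    using doubling_dim_ball_cover_pow[OF assms(1)] by blast
  have "(2 powr d) ^ k = (2 ^ k) powr d"
    by (simp add: powr_realpow[symmetric] powr_powr mult.commute flip: powr_power)
  also have "\<dots> \<le> (2 * \<rho> / s) powr d"
    using pow doubling_dim_nonneg[OF assms(1)] by (simp add: powr_mono2)
  finally have "real (card G) \<le> (2 * \<rho> / s) powr d" using G(2) by linarith
  moreover have "(\<Union>z\<in>G. ball z (\<rho> / 2 ^ k)) \<subseteq> (\<Union>z\<in>G. ball z s)"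
    using subset_ball[OF k(1)] by (intro UN_mono) auto
  with G(3) have "ball x \<rho> \<subseteq> (\<Union>z\<in>G. ball z s)" by (rule order_trans)
  ultimately show ?thesis using G(1) by blast
qed

lemma covering_number_le_doubling:
  assumes "doubling_dim TYPE('a::metric_space) d" and diam: "\<And>x y::'a. dist x y < \<rho>"
    and "0 < s" "s \<le> \<rho>"
  shows "covering_number s (A::'a set) \<le> ereal ((2 * \<rho> / s) powr d)"
proof -
  obtain G where G: "finite G" "real (card G) \<le> (2 * \<rho> / s) powr d"
      "ball (undefined::'a) \<rho> \<subseteq> (\<Union>z\<in>G. ball z s)"
    using doubling_dim_ball_cover_le_powr[OF assms(1) \<open>0 < s\<close> \<open>s \<le> \<rho>\<close>] by blast
  have "A \<subseteq> ball undefined \<rho>" using diam by auto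
  with G(3) have "covering_number s A \<le> ereal (real (card G))"
    by (intro covering_number_le_card[OF G(1)]) (rule order_trans)
  then show ?thesis using G(2) by (meson ereal_less_eq(3) order_trans)
qed

lemma covering_number_finite_doubling:
  assumes dd: "doubling_dim TYPE('a::metric_space) d" and diam: "\<And>x y::'a. dist x y < \<rho>"
    and "0 < s"
  shows "covering_number s (A::'a set) \<noteq> \<infinity>"
proof -
  have "covering_number s A \<le> covering_number (min s \<rho>) A"
    by (simp add: covering_number_antimono)
  also have "\<dots> \<le> ereal ((2 * \<rho> / min s \<rho>) powr d)"
    using diam[of undefined undefined] \<open>0 < s\<close> by (intro covering_number_le_doubling[OF dd diam]) auto
  finally show ?thesis by auto
qed

lemma box_dim_eq_Limsup:
  assumes "\<And>s. 0 < s \<Longrightarrow> covering_number s A \<noteq> \<infinity>"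
  shows "box_dim A = Limsup (at_right 0)
    (\<lambda>s. ereal (ln (real_of_ereal (covering_number s A)) / ln (1 / s)))"
  unfolding box_dim_def
  by (rule Limsup_eq) (use assms in \<open>auto simp: eventually_at_right_field intro: exI[of _ 1]\<close>)

lemma tendsto_const_divide_ln_inverse_0: "((\<lambda>s::real. c / ln (1 / s)) \<longlongrightarrow> 0) (at_right 0)"
proof -
  have "filterlim (\<lambda>s::real. ln (1 / s)) at_top (at_right 0)"
    using filterlim_compose[OF ln_at_top filterlim_inverse_at_top_right] by (simp add: divide_inverse)
  then show ?thesis by (intro tendsto_divide_0[OF tendsto_const] filterlim_at_top_imp_at_infinity)
qed

lemma box_dim_nonneg:
  assumes "A \<noteq> {}" and fin: "\<And>s. 0 < s \<Longrightarrow> covering_number s A \<noteq> \<infinity>"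
  shows "0 \<le> box_dim A"
proof -
  have "0 \<le> ln (real_of_ereal (covering_number s A)) / ln (1 / s)" if "0 < s" "s < 1" for s
  proof -
    have "1 \<le> real_of_ereal (covering_number s A)"
      using covering_number_ge_1[OF assms(1), of s] fin[OF that(1)]
      by (cases "covering_number s A") auto
    then show ?thesis using that by simp
  qed
  moreover have "box_dim A = Limsup (at_right 0)
      (\<lambda>s. ereal (ln (real_of_ereal (covering_number s A)) / ln (1 / s)))"
    using fin by (rule box_dim_eq_Limsup)
  ultimately show ?thesis
    by (auto simp: eventually_at_right_field intro!: le_Limsup exI[of _ 1])
qed

lemma box_dim_le_if_covering_number_le_powr:
  assumes "A \<noteq> {}" "0 < s0" and fin: "\<And>s. 0 < s \<Longrightarrow> covering_number s A \<noteq> \<infinity>"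
    and bound: "\<And>s. 0 < s \<Longrightarrow> s < s0 \<Longrightarrow> covering_number s A \<le> ereal (K * s powr (- d))"
  shows "box_dim A \<le> ereal d"
proof -
  define N where "N s = real_of_ereal (covering_number s A)" for s
  have "ln (N s) / ln (1 / s) \<le> d + ln K / ln (1 / s)" if s: "0 < s" "s < min s0 1" for s
  proof -
    have N: "1 \<le> N s" "N s \<le> K * s powr (- d)"
      using covering_number_ge_1[OF assms(1), of s] fin[OF s(1)] bound[of s] s
      unfolding N_def by (cases "covering_number s A"; simp)+
    then have "0 < K" by (smt (verit) mult_nonpos_nonneg powr_ge_zero)
    have "ln (N s) \<le> ln (K * s powr (- d))" using N by simp
    also have "\<dots> = ln K + d * ln (1 / s)" using \<open>0 < K\<close> s by (simp add: ln_mult ln_powr ln_div)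
    finally have "ln (N s) / ln (1 / s) \<le> (ln K + d * ln (1 / s)) / ln (1 / s)"
      using s by (intro divide_right_mono) auto
    also have "\<dots> = d + ln K / ln (1 / s)" using s by (simp add: field_simps)
    finally show ?thesis .
  qed
  moreover have "box_dim A = Limsup (at_right 0) (\<lambda>s. ereal (ln (N s) / ln (1 / s)))"
    unfolding N_def using fin by (rule box_dim_eq_Limsup)
  ultimately have "box_dim A \<le> Limsup (at_right 0) (\<lambda>s. ereal (d + ln K / ln (1 / s)))"
    using \<open>0 < s0\<close>
    by (auto simp: eventually_at_right_field intro!: Limsup_mono exI[of _ "min s0 1"])
  also have "\<dots> = ereal d"
    using tendsto_const_divide_ln_inverse_0[of "ln K"] by (intro lim_imp_Limsup) (auto intro: tendsto_eq_intros)
  finally show ?thesis .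
qed

lemma box_dim_le_doubling_dim:
  assumes dd: "doubling_dim TYPE('a::metric_space) d" and diam: "\<And>x y::'a. dist x y < \<rho>"
    and "A \<noteq> {}"
  shows "box_dim (A::'a set) \<le> ereal d"
proof (rule box_dim_le_if_covering_number_le_powr[OF \<open>A \<noteq> {}\<close>])
  show "0 < \<rho>" using diam[of undefined undefined] by simp
  show "covering_number s A \<noteq> \<infinity>" if "0 < s" for s
    using covering_number_finite_doubling[OF dd diam that] .
  show "covering_number s A \<le> ereal ((2 * \<rho>) powr d * s powr (- d))" if "0 < s" "s < \<rho>" for s
    using covering_number_le_doubling[OF dd diam, of s A] that
    by (simp add: powr_divide powr_minus_divide)
qed

lemma antimono_le_powr_extend:
  fixes N :: "real \<Rightarrow> real"
  assumes "0 \<le> e" "0 < R" "0 < \<delta>"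
    and antimono: "\<And>s s'. 0 < s \<Longrightarrow> s \<le> s' \<Longrightarrow> N s' \<le> N s"
    and nonneg: "\<And>s. 0 < s \<Longrightarrow> 0 \<le> N s"
    and small: "\<And>s. 0 < s \<Longrightarrow> s < \<delta> \<Longrightarrow> N s \<le> s powr (- e)"
  obtains K where "0 < K" "\<And>s. 0 < s \<Longrightarrow> s \<le> R \<Longrightarrow> N s \<le> K * s powr (- e)"
proof -
  define s1 where "s1 = min (\<delta> / 2) R"
  have s1: "0 < s1" "s1 < \<delta>" "s1 \<le> R"
    unfolding s1_def using \<open>0 < \<delta>\<close> \<open>0 < R\<close> by auto
  define K where "K = 1 + N s1 * R powr e"
  have "0 \<le> N s1 * R powr e" using nonneg[OF s1(1)] by simp
  then have "0 < K" unfolding K_def by linarith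
  then show ?thesis
  proof (rule that)
    fix s assume s: "0 < s" "s \<le> R"
    show "N s \<le> K * s powr (- e)"
    proof (cases "s < \<delta>")
      case True
      then have "N s \<le> s powr (- e)" using small s by simp
      also have "\<dots> \<le> K * s powr (- e)"
        using \<open>0 \<le> N s1 * R powr e\<close> by (simp add: K_def distrib_right)
      finally show ?thesis .
    next
      case False
      then have "N s \<le> N s1" using antimono[OF s1(1)] s1(2) by simp
      also have "\<dots> \<le> N s1 * (R powr e * s powr (- e))"
      proof -
        have "s powr e \<le> R powr e" using s \<open>0 \<le> e\<close> by (simp add: powr_mono2)
        then have "1 \<le> R powr e * s powr (- e)" using s by (simp add: powr_minus field_simps)
        then show ?thesis using mult_left_mono[OF _ nonneg[OF s1(1)], of 1] by simp
      qed
      also have "\<dots> \<le> K * s powr (- e)" by (simp add: K_def distrib_right mult.assoc)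
      finally show ?thesis .
    qed
  qed
qed

lemma covering_number_le_powr_if_box_dim_less:
  assumes "box_dim A < ereal e" "0 \<le> e" "0 < R"
    and fin: "\<And>s. 0 < s \<Longrightarrow> covering_number s A \<noteq> \<infinity>"
  obtains K where "0 < K" "\<And>s. 0 < s \<Longrightarrow> s \<le> R \<Longrightarrow> real_of_ereal (covering_number s A) \<le> K * s powr (- e)"
proof -
  define N where "N s = real_of_ereal (covering_number s A)" for s
  have N: "covering_number s A = ereal (N s)" "0 \<le> N s" if "0 < s" for s
    using covering_number_attained[OF fin[OF that]] unfolding N_def by (metis of_nat_0_le_iff real_of_ereal.simps(1))+
  have N_antimono: "N s' \<le> N s" if "0 < s" "s \<le> s'" for s s'
    using covering_number_antimono[OF that(2), of A] N that by simp
  have "\<forall>\<^sub>F s in at_right 0. ereal (ln (N s) / ln (1 / s)) < ereal e"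
  proof (rule Limsup_lessD)
    have "box_dim A = Limsup (at_right 0) (\<lambda>s. ereal (ln (N s) / ln (1 / s)))"
      unfolding N_def using fin by (rule box_dim_eq_Limsup)
    then show "Limsup (at_right 0) (\<lambda>s. ereal (ln (N s) / ln (1 / s))) < ereal e"
      using assms(1) by simp
  qed
  then obtain r0 where "0 < r0" and r0: "\<And>s. 0 < s \<Longrightarrow> s < r0 \<Longrightarrow> ln (N s) / ln (1 / s) < e"
    unfolding eventually_at_right_field by auto
  have small: "N s \<le> s powr (- e)" if s: "0 < s" "s < min r0 1" for s
  proof (cases "N s = 0")
    case False
    have "ln (N s) < e * ln (1 / s)"
      using r0[of s] s by (simp add: divide_less_eq)
    also have "\<dots> = ln (s powr (- e))" using s by (simp add: ln_powr ln_div)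
    finally have "N s < s powr (- e)"
      using False N(2)[OF s(1)] s by (subst (asm) ln_less_cancel_iff) auto
    then show ?thesis by simp
  qed simp
  obtain K where "0 < K" "\<And>s. 0 < s \<Longrightarrow> s \<le> R \<Longrightarrow> N s \<le> K * s powr (- e)"
    by (rule antimono_le_powr_extend[where N = N and \<delta> = "min r0 1"])
      (use \<open>0 \<le> e\<close> \<open>0 < R\<close> \<open>0 < r0\<close> N_antimono N(2) small in auto)
  then show ?thesis unfolding N_def by (rule that)
qed

lemma ml_coverable_annulus:
  fixes \<eta> :: "'a::metric_space \<Rightarrow> 'b"
  assumes ls: "length_space TYPE('a)" and dd: "doubling_dim TYPE('a) d" and "0 < s"
    and F: "finite F" "boundary \<eta> \<subseteq> (\<Union>y\<in>F. ball y s)"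
  shows "ml_coverable \<eta> (thicken (boundary \<eta>) (2 * s) - thicken (boundary \<eta>) s)
           ((2 powr d) ^ 4 * real (card F))"
proof -
  define V where "V = thicken (boundary \<eta>) (2 * s) - thicken (boundary \<eta>) s"
  have "\<forall>y::'a. \<exists>H. finite H \<and> real (card H) \<le> (2 powr d) ^ 4 \<and> ball y (3 * s) \<subseteq> (\<Union>z\<in>H. ball z (3 * s / 2 ^ 4))"
  proof
    fix y :: 'a
    have "0 < 3 * s" using \<open>0 < s\<close> by simp
    then show "\<exists>H. finite H \<and> real (card H) \<le> (2 powr d) ^ 4 \<and> ball y (3 * s) \<subseteq> (\<Union>z\<in>H. ball z (3 * s / 2 ^ 4))"
      by (rule doubling_dim_ball_cover_pow[OF dd])
  qed
  then obtain G :: "'a \<Rightarrow> 'a set" where G: "\<And>y. finite (G y)" "\<And>y. real (card (G y)) \<le> (2 powr d) ^ 4"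
      "\<And>y. ball y (3 * s) \<subseteq> (\<Union>z\<in>G y. ball z (3 * s / 2 ^ 4))"
    by metis
  define Fam where "Fam = (\<lambda>z. ball z (3 * s / 16) \<inter> V) ` (\<Union>y\<in>F. G y)"
  have "finite Fam" unfolding Fam_def using F(1) G(1) by blast
  have "real (card Fam) \<le> real (card (\<Union>y\<in>F. G y))"
    unfolding Fam_def using F(1) G(1) by (simp add: card_image_le)
  also have "\<dots> \<le> real (card F) * (2 powr d) ^ 4"
    using G(2) by (intro card_UN_le_card_mult[OF F(1)])
  finally have card: "real (card Fam) \<le> (2 powr d) ^ 4 * real (card F)"
    by (simp add: mult.commute)
  have "mutually_labeling \<eta> U" if "U \<in> Fam" for U
  proof -
    obtain z where U: "U = ball z (3 * s / 16) \<inter> V" using \<open>U \<in> Fam\<close> unfolding Fam_def by blast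
    show ?thesis
      by (rule mutually_labeling_if_far_from_boundary[OF ls, where z = z and \<rho> = "3 * s / 16" and s = s])
        (use \<open>0 < s\<close> in \<open>auto simp: U V_def\<close>)
  qed
  moreover have "V \<subseteq> \<Union>Fam"
  proof
    fix x assume "x \<in> V"
    then obtain b where b: "b \<in> boundary \<eta>" "dist b x < 2 * s" unfolding V_def thicken_def by auto
    then obtain y where y: "y \<in> F" "dist y b < s" using F(2) by auto
    have "x \<in> ball y (3 * s)" using dist_triangle[of y x b] b y by simp
    then obtain z where "z \<in> G y" "x \<in> ball z (3 * s / 16)" using G(3)[of y] by auto
    then show "x \<in> \<Union>Fam" using \<open>x \<in> V\<close> y(1) unfolding Fam_def by blast
  qed
  ultimately show ?thesis
    unfolding ml_coverable_def V_def[symmetric] using \<open>finite Fam\<close> card by blast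
qed

lemma ml_coverable_dyadic_annuli:
  fixes \<eta> :: "'a::metric_space \<Rightarrow> 'b"
  assumes ls: "length_space TYPE('a)" and dd: "doubling_dim TYPE('a) d" and "0 < r"
    and fin: "\<And>s. 0 < s \<Longrightarrow> covering_number s (boundary \<eta>) \<noteq> \<infinity>"
  shows "ml_coverable \<eta> (thicken (boundary \<eta>) (r * 2 ^ n) - thicken (boundary \<eta>) r)
           ((2 powr d) ^ 4 * (\<Sum>j<n. real_of_ereal (covering_number (r * 2 ^ j) (boundary \<eta>))))"
proof (induction n)
  case 0
  show ?case unfolding ml_coverable_def by (intro exI[of _ "{}"]) auto
next
  case (Suc n)
  define s where "s = r * 2 ^ n"
  have "0 < s" using \<open>0 < r\<close> unfolding s_def by simp
  obtain F where F: "finite F" "boundary \<eta> \<subseteq> (\<Union>y\<in>F. ball y s)"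
      "covering_number s (boundary \<eta>) = ereal (real (card F))"
    using covering_number_attained[OF fin[OF \<open>0 < s\<close>]] by blast
  have "ml_coverable \<eta> (thicken (boundary \<eta>) (2 * s) - thicken (boundary \<eta>) s)
          ((2 powr d) ^ 4 * real_of_ereal (covering_number s (boundary \<eta>)))"
    using ml_coverable_annulus[OF ls dd \<open>0 < s\<close> F(1,2)] F(3) by simp
  from ml_coverable_Un[OF Suc.IH this]
  have "ml_coverable \<eta> (thicken (boundary \<eta>) (2 * s) - thicken (boundary \<eta>) r)
      ((2 powr d) ^ 4 * (\<Sum>j<Suc n. real_of_ereal (covering_number (r * 2 ^ j) (boundary \<eta>))))"
    by (rule ml_coverable_mono) (auto simp: s_def distrib_left)
  moreover have "2 * s = r * 2 ^ Suc n" unfolding s_def by simp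
  ultimately show ?case by simp
qed

lemma N_ML_outside_thicken_le_dyadic_sum:
  fixes \<eta> :: "'a::metric_space \<Rightarrow> 'b"
  assumes ls: "length_space TYPE('a)" and dd: "doubling_dim TYPE('a) d"
    and diam: "\<And>x y::'a. dist x y \<le> R" and "boundary \<eta> \<noteq> {}"
    and fin: "\<And>s. 0 < s \<Longrightarrow> covering_number s (boundary \<eta>) \<noteq> \<infinity>" and "0 < r"
  obtains n where "\<And>j. j < n \<Longrightarrow> r * 2 ^ j \<le> R"
    "N_ML \<eta> (UNIV - thicken (boundary \<eta>) r)
       \<le> ereal ((2 powr d) ^ 4 * (\<Sum>j<n. real_of_ereal (covering_number (r * 2 ^ j) (boundary \<eta>))))"
proof -
  have "\<exists>n. R < r * 2 ^ n"
  proof -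
    obtain n where "R / r < 2 ^ n" using real_arch_pow[of 2 "R / r"] by auto
    then show ?thesis using \<open>0 < r\<close> by (auto simp: field_simps)
  qed
  then obtain n where n: "R < r * 2 ^ n" "\<And>j. j < n \<Longrightarrow> r * 2 ^ j \<le> R"
    using exists_least_iff[of "\<lambda>n. R < r * 2 ^ n"] by (meson not_le)
  have "thicken (boundary \<eta>) (r * 2 ^ n) = UNIV"
    using \<open>boundary \<eta> \<noteq> {}\<close> diam n(1) unfolding thicken_def by (fastforce intro: le_less_trans)
  then have "UNIV - thicken (boundary \<eta>) r \<subseteq> thicken (boundary \<eta>) (r * 2 ^ n) - thicken (boundary \<eta>) r"
    by simp
  from ml_coverable_mono[OF ml_coverable_dyadic_annuli[OF ls dd \<open>0 < r\<close> fin] this order_refl]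
  show ?thesis using that n(2) by (blast dest: N_ML_le_if_ml_coverable)
qed

lemma sum_dyadic_le_geometric:
  fixes g :: "real \<Rightarrow> real"
  assumes "0 < e" "0 < r" "0 \<le> K" and g: "\<And>j. j < n \<Longrightarrow> g (r * 2 ^ j) \<le> K * (r * 2 ^ j) powr (- e)"
  shows "(\<Sum>j<n. g (r * 2 ^ j)) \<le> K / (1 - 2 powr (- e)) * r powr (- e)"
proof -
  define q :: real where "q = 2 powr (- e)"
  have q: "0 < q" "q < 1" unfolding q_def using \<open>0 < e\<close> by (auto intro: powr_less_one)
  have "(r * 2 ^ j) powr (- e) = r powr (- e) * q ^ j" for j :: nat
    using \<open>0 < r\<close> by (simp add: q_def powr_mult powr_realpow[symmetric] powr_powr mult.commute flip: powr_power)
  then have "(\<Sum>j<n. g (r * 2 ^ j)) \<le> K * r powr (- e) * (\<Sum>j<n. q ^ j)"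
    using sum_mono[of "{..<n}", OF g] by (simp add: sum_distrib_left mult.assoc)
  also have "\<dots> = K * r powr (- e) * ((1 - q ^ n) / (1 - q))"
    using q by (simp add: sum_gp_strict)
  also have "\<dots> \<le> K * r powr (- e) * (1 / (1 - q))"
    using q \<open>0 \<le> K\<close> by (intro mult_left_mono divide_right_mono) auto
  finally show ?thesis unfolding q_def by simp
qed

lemma N_ML_outside_thicken_le_powr:
  fixes \<eta> :: "'a::metric_space \<Rightarrow> 'b"
  assumes ls: "length_space TYPE('a)" and dd: "doubling_dim TYPE('a) d"
    and diam: "\<And>x y::'a. dist x y \<le> R" and B: "boundary \<eta> \<noteq> {}"
    and fin: "\<And>s. 0 < s \<Longrightarrow> covering_number s (boundary \<eta>) \<noteq> \<infinity>"
    and "0 < e" "0 \<le> K"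
    and K: "\<And>s. 0 < s \<Longrightarrow> s \<le> R \<Longrightarrow> real_of_ereal (covering_number s (boundary \<eta>)) \<le> K * s powr (- e)"
    and "0 < r"
  shows "N_ML \<eta> (UNIV - thicken (boundary \<eta>) r)
           \<le> ereal ((2 powr d) ^ 4 * (K / (1 - 2 powr (- e)) * r powr (- e)))"
proof -
  obtain n where n: "\<And>j. j < n \<Longrightarrow> r * 2 ^ j \<le> R"
    and N: "N_ML \<eta> (UNIV - thicken (boundary \<eta>) r)
      \<le> ereal ((2 powr d) ^ 4 * (\<Sum>j<n. real_of_ereal (covering_number (r * 2 ^ j) (boundary \<eta>))))"
    using N_ML_outside_thicken_le_dyadic_sum[OF ls dd diam B fin \<open>0 < r\<close>] by blast
  have "(\<Sum>j<n. real_of_ereal (covering_number (r * 2 ^ j) (boundary \<eta>)))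
      \<le> K / (1 - 2 powr (- e)) * r powr (- e)"
    using \<open>0 < e\<close> \<open>0 < r\<close> \<open>0 \<le> K\<close> K n by (intro sum_dyadic_le_geometric) auto
  then show ?thesis
    using N by (meson ereal_less_eq(3) mult_left_mono order_trans zero_le_power powr_ge_zero)
qed

lemma N_ML_outside_thicken_le_box_dim_powr:
  fixes \<eta> :: "'a::metric_space \<Rightarrow> 'b"
  assumes ls: "length_space TYPE('a)" and dd: "doubling_dim TYPE('a) d"
    and diam: "\<And>x y::'a. dist x y \<le> R" and B: "boundary \<eta> \<noteq> {}" and "0 < R" "0 < c"
  obtains M where "0 < M" "\<And>r. 0 < r \<Longrightarrow> N_ML \<eta> (UNIV - thicken (boundary \<eta>) r)
      \<le> ereal (M * r powr (- (real_of_ereal (box_dim (boundary \<eta>)) + c)))"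
proof -
  have diam': "dist x y < R + 1" for x y :: 'a
    using diam[of x y] by simp
  have fin: "covering_number s (boundary \<eta>) \<noteq> \<infinity>" if "0 < s" for s
    using covering_number_finite_doubling[OF dd diam' that] .
  (* Finiteness of the box dimension matters: real_of_ereal would send \<infinity> to 0. *)
  obtain b where b: "box_dim (boundary \<eta>) = ereal b" "0 \<le> b"
    using box_dim_nonneg[OF B fin] box_dim_le_doubling_dim[OF dd diam' B]
    by (cases "box_dim (boundary \<eta>)") auto
  define e where "e = b + c"
  have "0 < e" "box_dim (boundary \<eta>) < ereal e" unfolding e_def using b \<open>0 < c\<close> by auto
  then obtain K where K: "0 < K"
      "\<And>s. 0 < s \<Longrightarrow> s \<le> R \<Longrightarrow> real_of_ereal (covering_number s (boundary \<eta>)) \<le> K * s powr (- e)"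
    using covering_number_le_powr_if_box_dim_less[OF _ _ \<open>0 < R\<close> fin] by (metis less_imp_le)
  define M where "M = (2 powr d) ^ 4 * (K / (1 - 2 powr (- e)))"
  show ?thesis
  proof (rule that)
    show "0 < M" unfolding M_def using K(1) \<open>0 < e\<close> by (simp add: powr_less_one)
    show "N_ML \<eta> (UNIV - thicken (boundary \<eta>) r)
        \<le> ereal (M * r powr (- (real_of_ereal (box_dim (boundary \<eta>)) + c)))" if "0 < r" for r
      unfolding b(1) real_of_ereal.simps e_def[symmetric] M_def mult.assoc
      by (rule N_ML_outside_thicken_le_powr[where R = R])
        (use ls dd diam B fin \<open>0 < e\<close> K \<open>0 < r\<close> in \<open>auto simp: less_imp_le\<close>)
  qed
qed

theorem proposition4:
  fixes \<nu> :: "'a::metric_space measure"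
    and \<eta> :: "'a \<Rightarrow> 'b"
    and d R :: real
  assumes "length_space TYPE('a)"
    and "bounded (UNIV :: 'a set)"
    and "doubling_dim TYPE('a) d"
    and "R = diameter (UNIV :: 'a set)"
    and "sets \<nu> = sets borel" and "finite_measure \<nu>"
    and "\<eta> \<in> borel \<rightarrow>\<^sub>M count_space UNIV"
    and "boundary \<eta> \<in> null_sets \<nu>"
    and "boundary \<eta> \<noteq> {}"
    and "c > 0"
  shows "\<exists>C>0. \<forall>r>0. N_ML \<eta> (UNIV - thicken (boundary \<eta>) r)
           \<le> ereal (C * R powr (4 * d) * r powr (- (real_of_ereal (box_dim (boundary \<eta>)) + c)))"
proof -
  have diam: "dist x y \<le> R" for x y :: 'a
    using diameter_bounded_bound[OF assms(2)] assms(4) by simp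
  have "0 < R" using diameter_pos_if_boundary_nonempty[OF assms(2,9)] assms(4) by simp
  obtain M where M: "0 < M" "\<And>r. 0 < r \<Longrightarrow> N_ML \<eta> (UNIV - thicken (boundary \<eta>) r)
      \<le> ereal (M * r powr (- (real_of_ereal (box_dim (boundary \<eta>)) + c)))"
    using N_ML_outside_thicken_le_box_dim_powr[OF assms(1,3) diam assms(9) \<open>0 < R\<close> assms(10)] by blast
  show ?thesis
  proof (intro exI[of _ "M / R powr (4 * d)"] conjI allI impI)
    show "0 < M / R powr (4 * d)" using M(1) \<open>0 < R\<close> by simp
    show "N_ML \<eta> (UNIV - thicken (boundary \<eta>) r)
        \<le> ereal (M / R powr (4 * d) * R powr (4 * d) * r powr (- (real_of_ereal (box_dim (boundary \<eta>)) + c)))"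
      if "0 < r" for r
      using M(2)[OF that] \<open>0 < R\<close> by simp
  qed
qed

end
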